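(* Let $\Phi_{usc}=\{(X,f):\,X\subseteq\mathbb{R}^d\text{ closed},\ f:X\rightarrow\overline{\mathbb{R}}\text{ upper semi-continuous}\}$, topologized via the bijection $\tau:(X,f)\mapsto\{(x,t)\in X\times\overline{\mathbb{R}}:\,t\leq f(x)\}$ onto the family $\mathcal{U}_{cl}$ of closed sets $A\subseteq\mathbb{R}^d\times\overline{\mathbb{R}}$ satisfying: for all $x\in\mathbb{R}^d$ and $t\in\overline{\mathbb{R}}$, $(x,t)\in A$ implies $\{x\}\times[-\infty,t]\subseteq A$. Then $\Phi_{usc}$ is compact in the topology induced by $\mathcal{U}_{cl}$.
   Context: $\overline{\mathbb{R}}=[-\infty,\infty]$ is the extended real line. $\mathcal{U}_{cl}$ carries the topology it inherits as a subspace of the space $\mathcal{F}(\mathbb{R}^d\times\overline{\mathbb{R}})$ of all closed subsets of $\mathbb{R}^d\times\overline{\mathbb{R}}$ equipped with the Fell (hit-or-miss) topology; $\Phi_{usc}$ carries the topology making $\tau$ a homeomorphism. *)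

theory Defs
  imports "HOL-Analysis.Analysis" "HOL-Library.Extended_Real"
begin

definition usc_on :: "('a::topological_space) set \<Rightarrow> ('a \<Rightarrow> ereal) \<Rightarrow> bool" where
  "usc_on X f \<longleftrightarrow> (\<forall>a. openin (top_of_set X) {x \<in> X. f x < a})"

definition fell_topology :: "('a::topological_space) set topology" where
  "fell_topology = subtopology
     (topology_generated_by
        ({{F. F \<inter> K = {}} | K. compact K} \<union> {{F. F \<inter> G \<noteq> {}} | G. open G}))
     {F. closed F}"

text \<open>Functions are represented extensionally: f is fixed to be -infinity outside X,
  so that (X, f) corresponds exactly to a function on X.\<close>
definition Phi_usc :: "((real^'n) set \<times> ((real^'n) \<Rightarrow> ereal)) set" where
  "Phi_usc = {(X, f). closed X \<and> usc_on X f \<and> (\<forall>x. x \<notin> X \<longrightarrow> f x = -\<infinity>)}"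

definition tau :: "(real^'n) set \<times> ((real^'n) \<Rightarrow> ereal) \<Rightarrow> ((real^'n) \<times> ereal) set" where
  "tau p = {(x, t). x \<in> fst p \<and> t \<le> snd p x}"

definition U_cl :: "((real^'n) \<times> ereal) set set" where
  "U_cl = {A. closed A \<and> (\<forall>x t. (x, t) \<in> A \<longrightarrow> {x} \<times> {-\<infinity>..t} \<subseteq> A)}"

definition Phi_usc_topology :: "((real^'n) set \<times> ((real^'n) \<Rightarrow> ereal)) topology" where
  "Phi_usc_topology = pullback_topology Phi_usc tau (subtopology fell_topology U_cl)"

end

theory Submission
  imports Defs
begin

text \<open>Through \<open>tau\<close> it suffices to show that the family \<open>U_cl\<close> of closed, vertically
  downward closed sets is compact in the Fell topology; every such set is the hypograph of
  the upper semicontinuous function \<open>x \<mapsto> Sup {t. (x, t) \<in> A}\<close> on the closed set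
  \<open>{x. (x, -\<infinity>) \<in> A}\<close>. Compactness follows from Alexander's subbase theorem: given a
  cover by subbasic sets, let \<open>G\<close> be the union of the open sets \<open>G\<^sub>i\<close> whose hit-sets
  occur in it. The complement \<open>F\<^sub>0\<close> of the upward closure of \<open>G\<close> lies in \<open>U_cl\<close> and
  hits no \<open>G\<^sub>i\<close>, so it lies in a miss-set of some compact \<open>K\<close>. Then \<open>K\<close> is covered by
  finitely many upward closures of the \<open>G\<^sub>i\<close>, and a downward closed set meets \<open>G\<^sub>i\<close>
  as soon as it meets its upward closure.\<close>

lemma compact_space_pullback_topology:
  assumes "compact_space T" "topspace T \<subseteq> f ` A"
  shows "compact_space (pullback_topology A f T)"
  unfolding compact_space_alt
proof (intro allI impI)
  fix \<U>
  assume "(\<forall>U\<in>\<U>. openin (pullback_topology A f T) U) \<and> topspace (pullback_topology A f T) \<subseteq> \<Union>\<U>"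
  then have open_\<U>: "\<forall>U\<in>\<U>. \<exists>V. openin T V \<and> U = f -` V \<inter> A"
    and cover: "f -` topspace T \<inter> A \<subseteq> \<Union>\<U>"
    by (auto simp: openin_pullback_topology topspace_pullback_topology)
  define \<V> where "\<V> = {V. openin T V \<and> f -` V \<inter> A \<in> \<U>}"
  have "topspace T \<subseteq> \<Union>\<V>"
  proof
    fix y
    assume "y \<in> topspace T"
    then obtain a U where "a \<in> A" "y = f a" "a \<in> U" "U \<in> \<U>"
      using assms(2) cover by blast
    moreover from \<open>U \<in> \<U>\<close> obtain V where "openin T V" "U = f -` V \<inter> A"
      using open_\<U> by blast
    ultimately show "y \<in> \<Union>\<V>"
      by (auto simp: \<V>_def)
  qed
  moreover have "\<forall>V\<in>\<V>. openin T V"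
    by (simp add: \<V>_def)
  ultimately obtain \<F> where \<F>: "finite \<F>" "\<F> \<subseteq> \<V>" "topspace T \<subseteq> \<Union>\<F>"
    using assms(1) compact_space_alt by meson
  show "\<exists>\<G>. finite \<G> \<and> \<G> \<subseteq> \<U> \<and> topspace (pullback_topology A f T) \<subseteq> \<Union>\<G>"
  proof (intro exI conjI)
    show "finite ((\<lambda>V. f -` V \<inter> A) ` \<F>)" "(\<lambda>V. f -` V \<inter> A) ` \<F> \<subseteq> \<U>"
      using \<F>(1,2) by (auto simp: \<V>_def)
    show "topspace (pullback_topology A f T) \<subseteq> \<Union>((\<lambda>V. f -` V \<inter> A) ` \<F>)"
      using \<F>(3) by (auto simp: topspace_pullback_topology)
  qed
qed

lemma subtopology_topology_generated_by:
  assumes "U \<subseteq> \<Union>S"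
  shows "topology (arbitrary union_of (finite intersection_of (\<lambda>x. x \<in> S) relative_to U))
       = subtopology (topology_generated_by S) U"
proof -
  have "subtopology (topology_generated_by S) U
      = topology (arbitrary union_of (finite' intersection_of (\<lambda>x. x \<in> S) relative_to U))"
  proof -
    have "openin (topology_generated_by S) = generate_topology_on S"
      using openin_topology_generated_by_iff by blast
    then have "openin (subtopology (topology_generated_by S) U)
        = arbitrary union_of (finite' intersection_of (\<lambda>x. x \<in> S) relative_to U)"
      by (simp flip: openin_relative_to add: generate_topology_on_eq arbitrary_union_of_relative_to)
    then show ?thesis by (metis openin_inverse)
  qed
  also have "\<dots> = topology (arbitrary union_of (finite intersection_of (\<lambda>x. x \<in> S) relative_to U))"
    \<comment> \<open>The bases differ only by the empty intersection, i.e. by \<open>U\<close>, which is covered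
      by the sets \<open>U \<inter> s\<close> since \<open>U \<subseteq> \<Union>S\<close>.\<close>
  proof (rule topology_bases_eq)
    fix V x
    assume "(finite' intersection_of (\<lambda>x. x \<in> S) relative_to U) V" "x \<in> V"
    moreover from this(1) have "(finite intersection_of (\<lambda>x. x \<in> S) relative_to U) V"
      by (rule relative_to_mono) (auto simp: intersection_of_def)
    ultimately show "\<exists>W. (finite intersection_of (\<lambda>x. x \<in> S) relative_to U) W \<and> x \<in> W \<and> W \<subseteq> V"
      by blast
  next
    fix V x
    assume V: "(finite intersection_of (\<lambda>x. x \<in> S) relative_to U) V" and "x \<in> V"
    then obtain s where "s \<in> S" "x \<in> s" using assms by (auto simp: relative_to_def)
    from V obtain \<U> where "finite \<U>" "\<U> \<subseteq> S" "V = U \<inter> \<Inter>\<U>"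
      by (auto simp: relative_to_def intersection_of_def)
    then have "(finite' intersection_of (\<lambda>x. x \<in> S) relative_to U) (U \<inter> \<Inter>(insert s \<U>))"
      using \<open>s \<in> S\<close> unfolding relative_to_def intersection_of_def
      by (intro exI[of _ "\<Inter>(insert s \<U>)"] conjI exI[of _ "insert s \<U>"]) auto
    then show "\<exists>W. (finite' intersection_of (\<lambda>x. x \<in> S) relative_to U) W \<and> x \<in> W \<and> W \<subseteq> V"
      using \<open>x \<in> V\<close> \<open>x \<in> s\<close> \<open>V = U \<inter> \<Inter>\<U>\<close> by blast
  qed
  finally show ?thesis ..
qed

definition fell_subbase :: "'a::topological_space set set set" where
  "fell_subbase = {{F. F \<inter> K = {}} | K. compact K} \<union> {{F. F \<inter> G \<noteq> {}} | G. open G}"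

lemma Union_fell_subbase: "\<Union>fell_subbase = UNIV"
proof -
  have "{F. F \<inter> {} = {}} \<in> fell_subbase"
    unfolding fell_subbase_def by (intro UnI1 CollectI exI[of _ "{}"]) simp
  then show ?thesis by auto
qed

lemma subtopology_fell_topology:
  assumes "\<F> \<subseteq> {F. closed F}"
  shows "subtopology fell_topology \<F>
       = topology (arbitrary union_of (finite intersection_of (\<lambda>x. x \<in> fell_subbase) relative_to \<F>))"
proof -
  have "{F. closed F} \<inter> \<F> = \<F>"
    using assms by blast
  then have "subtopology fell_topology \<F> = subtopology (topology_generated_by fell_subbase) \<F>"
    unfolding fell_topology_def subtopology_subtopology fell_subbase_def by simp
  then show ?thesis
    using subtopology_topology_generated_by[of \<F> fell_subbase] by (simp add: Union_fell_subbase)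
qed

definition upward_closure :: "('a \<times> 'b::order) set \<Rightarrow> ('a \<times> 'b) set" where
  "upward_closure G = {(x, t). \<exists>s\<le>t. (x, s) \<in> G}"

lemma subset_upward_closure: "G \<subseteq> upward_closure G"
  by (auto simp: upward_closure_def)

lemma upward_closure_Union: "upward_closure (\<Union>\<G>) = (\<Union>G\<in>\<G>. upward_closure G)"
  by (auto simp: upward_closure_def)

lemma open_upward_closure:
  fixes G :: "('a::topological_space \<times> ereal) set"
  assumes "open G"
  shows "open (upward_closure G)"
proof (rule Topological_Spaces.openI)
  fix p
  assume "p \<in> upward_closure G"
  then obtain x t s where p: "p = (x, t)" "s \<le> t" "(x, s) \<in> G"
    by (auto simp: upward_closure_def)
  then obtain U V where UV: "open U" "open V" "x \<in> U" "s \<in> V" "U \<times> V \<subseteq> G"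
    using open_prod_elim[OF assms] by (metis mem_Sigma_iff)
  have "U \<times> (V \<union> {s<..}) \<subseteq> upward_closure G"
  proof clarify
    fix y t'
    assume "y \<in> U" "t' \<in> V \<union> {s<..}"
    then have "(y, t') \<in> G \<or> (s \<le> t' \<and> (y, s) \<in> G)"
      using UV by auto
    then show "(y, t') \<in> upward_closure G"
      unfolding upward_closure_def by blast
  qed
  moreover have "p \<in> U \<times> (V \<union> {s<..})"
    using p UV by (cases "s = t") auto
  moreover have "open (U \<times> (V \<union> {s<..}))"
    using UV by (intro open_Times open_Un) auto
  ultimately show "\<exists>T. open T \<and> p \<in> T \<and> T \<subseteq> upward_closure G"
    by blast
qed

lemma U_cl_downward:
  assumes "A \<in> U_cl" "(x, t) \<in> A" "s \<le> t"
  shows "(x, s) \<in> A"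
proof -
  have "{x} \<times> {-\<infinity>..t} \<subseteq> A"
    using assms(1,2) by (auto simp: U_cl_def)
  then show ?thesis
    using assms(3) by auto
qed

lemma compl_upward_closure_in_U_cl:
  assumes "open G"
  shows "- upward_closure G \<in> U_cl"
proof -
  have "closed (- upward_closure G)"
    using open_upward_closure[OF assms] by (simp add: closed_Compl)
  moreover have "(x, s) \<notin> upward_closure G" if "(x, t) \<notin> upward_closure G" "s \<le> t" for x s t
    using that order_trans by (fastforce simp: upward_closure_def)
  ultimately show ?thesis
    unfolding U_cl_def by auto
qed

lemma U_cl_Int_upward_closure:
  assumes "A \<in> U_cl"
  shows "A \<inter> upward_closure G \<noteq> {} \<longleftrightarrow> A \<inter> G \<noteq> {}"
  using U_cl_downward[OF assms] subset_upward_closure[of G] by (fastforce simp: upward_closure_def)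

lemma U_cl_fell_subbase_finite_subcover:
  assumes C: "C \<subseteq> fell_subbase" and cover: "U_cl \<subseteq> \<Union>C"
  shows "\<exists>C'. finite C' \<and> C' \<subseteq> C \<and> U_cl \<subseteq> \<Union>C'"
proof -
  define \<G> where "\<G> = {G. open G \<and> {F. F \<inter> G \<noteq> {}} \<in> C}"
  define F\<^sub>0 where "F\<^sub>0 = - upward_closure (\<Union>\<G>)"
  have "F\<^sub>0 \<in> U_cl"
    unfolding F\<^sub>0_def by (rule compl_upward_closure_in_U_cl) (auto simp: \<G>_def)
  then obtain c where c: "c \<in> C" "F\<^sub>0 \<in> c"
    using cover by blast
  have F\<^sub>0_misses: "F\<^sub>0 \<inter> G = {}" if "G \<in> \<G>" for G
    using that subset_upward_closure[of "\<Union>\<G>"] by (auto simp: F\<^sub>0_def)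
  have "c \<in> fell_subbase"
    using c(1) C by blast
  moreover have "c \<notin> {{F. F \<inter> G \<noteq> {}} | G. open G}"
  proof
    assume "c \<in> {{F. F \<inter> G \<noteq> {}} | G. open G}"
    then obtain G where "open G" "c = {F. F \<inter> G \<noteq> {}}"
      by blast
    moreover from this have "G \<in> \<G>"
      using c(1) by (simp add: \<G>_def)
    ultimately show False
      using F\<^sub>0_misses c(2) by blast
  qed
  ultimately have "c \<in> {{F. F \<inter> K = {}} | K. compact K}"
    unfolding fell_subbase_def Un_iff by argo
  then obtain K where K: "compact K" "c = {F. F \<inter> K = {}}"
    by blast
  then have "K \<subseteq> (\<Union>G\<in>\<G>. upward_closure G)"
    using c by (auto simp: F\<^sub>0_def upward_closure_Union)
  then obtain D where D: "D \<subseteq> \<G>" "finite D" "K \<subseteq> (\<Union>G\<in>D. upward_closure G)"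
    using compactE_image[OF K(1), of \<G> upward_closure] open_upward_closure
    unfolding \<G>_def by blast
  define C' where "C' = insert c ((\<lambda>G. {F. F \<inter> G \<noteq> {}}) ` D)"
  have "A \<in> \<Union>C'" if "A \<in> U_cl" for A
  proof (cases "A \<inter> K = {}")
    case True
    then show ?thesis
      using K(2) by (auto simp: C'_def)
  next
    case False
    then obtain G where "G \<in> D" "A \<inter> upward_closure G \<noteq> {}"
      using D(3) by blast
    then show ?thesis
      using U_cl_Int_upward_closure[OF that] by (auto simp: C'_def)
  qed
  moreover have "finite C'" "C' \<subseteq> C"
    using D c(1) by (auto simp: C'_def \<G>_def)
  ultimately show ?thesis
    by blast
qed

lemma compact_space_U_cl: "compact_space (subtopology fell_topology U_cl)"
proof (rule Alexander_subbase_alt)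
  show "U_cl \<subseteq> \<Union>fell_subbase"
    by (simp add: Union_fell_subbase)
  show "topology (arbitrary union_of (finite intersection_of (\<lambda>x. x \<in> fell_subbase) relative_to U_cl))
      = subtopology fell_topology U_cl"
    by (rule subtopology_fell_topology[symmetric]) (auto simp: U_cl_def)
qed (rule U_cl_fell_subbase_finite_subcover)

lemma closed_horizontal_slice:
  fixes A :: "('a::topological_space \<times> 'b::topological_space) set"
  assumes "closed A"
  shows "closed {x. (x, t) \<in> A}"
proof -
  have "closed ((\<lambda>x. (x, t)) -` A)"
    using assms by (intro closed_vimage continuous_intros)
  then show ?thesis
    by (simp add: vimage_def)
qed

lemma closed_vertical_slice:
  fixes A :: "('a::topological_space \<times> 'b::topological_space) set"
  assumes "closed A"
  shows "closed {t. (x, t) \<in> A}"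
proof -
  have "closed ((\<lambda>t. (x, t)) -` A)"
    using assms by (intro closed_vimage continuous_intros)
  then show ?thesis
    by (simp add: vimage_def)
qed

lemma closed_if_closed_tau:
  assumes "closed (tau (X, f))"
  shows "closed X"
proof -
  have "X = {x. (x, -\<infinity>) \<in> tau (X, f)}"
    by (auto simp: tau_def)
  then show ?thesis
    using closed_horizontal_slice[OF assms, of "-\<infinity>"] by simp
qed

lemma usc_on_if_closed_tau:
  assumes "closed (tau (X, f))"
  shows "usc_on X f"
  unfolding usc_on_def
proof
  fix a
  have "{x \<in> X. f x < a} = X \<inter> - {x. (x, a) \<in> tau (X, f)}"
    by (auto simp: tau_def not_le)
  then show "openin (top_of_set X) {x \<in> X. f x < a}"
    using closed_horizontal_slice[OF assms] by (simp add: openin_open_Int open_Compl)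
qed

lemma tau_Sup_fibre:
  assumes "A \<in> U_cl"
  shows "tau ({x. (x, -\<infinity>) \<in> A}, \<lambda>x. Sup {t. (x, t) \<in> A}) = A"
proof -
  have Sup_in: "(x, Sup {t. (x, t) \<in> A}) \<in> A" if "(x, -\<infinity>) \<in> A" for x
  proof -
    have "closed {t. (x, t) \<in> A}"
      using assms by (intro closed_vertical_slice) (simp add: U_cl_def)
    moreover have "{t. (x, t) \<in> A} \<noteq> {}"
      using that by blast
    ultimately show ?thesis
      using closed_contains_Sup_cl by blast
  qed
  have "(x, t) \<in> tau ({x. (x, -\<infinity>) \<in> A}, \<lambda>x. Sup {t. (x, t) \<in> A}) \<longleftrightarrow> (x, t) \<in> A"
    for x t
  proof
    assume "(x, t) \<in> tau ({x. (x, -\<infinity>) \<in> A}, \<lambda>x. Sup {t. (x, t) \<in> A})"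
    then have "(x, -\<infinity>) \<in> A" "t \<le> Sup {t. (x, t) \<in> A}"
      by (simp_all add: tau_def)
    then show "(x, t) \<in> A"
      using Sup_in U_cl_downward[OF assms] by blast
  next
    assume "(x, t) \<in> A"
    moreover have "(x, -\<infinity>) \<in> A"
      using U_cl_downward[OF assms \<open>(x, t) \<in> A\<close>] by simp
    ultimately show "(x, t) \<in> tau ({x. (x, -\<infinity>) \<in> A}, \<lambda>x. Sup {t. (x, t) \<in> A})"
      by (simp add: tau_def Sup_upper)
  qed
  then show ?thesis
    by auto
qed

lemma U_cl_subset_tau_image: "U_cl \<subseteq> tau ` Phi_usc"
proof
  fix A :: "((real^'n) \<times> ereal) set"
  assume A: "A \<in> U_cl"
  define X where "X = {x. (x, -\<infinity>) \<in> A}"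
  define f where "f x = Sup {t. (x, t) \<in> A}" for x
  have "tau (X, f) = A"
    using tau_Sup_fibre[OF A] by (simp add: X_def f_def[abs_def])
  moreover have "closed A"
    using A by (simp add: U_cl_def)
  moreover have "f x = -\<infinity>" if "x \<notin> X" for x
    \<comment> \<open>the fibre over such \<open>x\<close> is empty, and \<open>Sup {} = -\<infinity>\<close> in \<open>ereal\<close>\<close>
    using that U_cl_downward[OF A] by (auto simp: X_def f_def Sup_eq_MInfty)
  ultimately have "(X, f) \<in> Phi_usc"
    using closed_if_closed_tau[of X f] usc_on_if_closed_tau[of X f] by (simp add: Phi_usc_def)
  with \<open>tau (X, f) = A\<close> show "A \<in> tau ` Phi_usc"
    by (metis image_eqI)
qed

theorem proposition2p1:
  shows "compact_space (Phi_usc_topology :: ((real^'n) set \<times> ((real^'n) \<Rightarrow> ereal)) topology)"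
  unfolding Phi_usc_topology_def
proof (rule compact_space_pullback_topology)
  show "compact_space (subtopology fell_topology U_cl)"
    by (rule compact_space_U_cl)
  show "topspace (subtopology fell_topology U_cl) \<subseteq> tau ` Phi_usc"
    unfolding topspace_subtopology by (rule inf.coboundedI2[OF U_cl_subset_tau_image])
qed

end
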